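(* Let $\Gamma'$ be a triangulation of a connected closed surface $M$. For every zigzag $e_1,e_2,e_3,\dots$ of $\Gamma'$ there are edges $e_i',e_i''$ of $\mathrm{T}(\Gamma')$ (joining the centre of the face containing $e_i,e_{i+1}$ to vertices of that face) such that $e_1,e_1',e_1'',e_2,e_2',e_2'',e_3,\dots$ is a zigzag of $\mathrm{T}(\Gamma')$, and it passes through each edge of $\Gamma'$ in the direction opposite to that of the original zigzag. Consequently every $z$-orientation $\tau'$ of $\Gamma'$ induces a $z$-orientation $t(\tau')$ of $\mathrm{T}(\Gamma')$ with $t(\tau'^{-1})=t(\tau')^{-1}$, and $\mathrm{T}(\Gamma')$ is $z$-knotted if and only if $\Gamma'$ is $z$-knotted.
   Context: A triangulation of a connected closed surface $M$ is a $2$-cell embedding of a connected simple finite graph in $M$ with all faces triangles. A zigzag is a sequence of edges $(e_i)$ such that $e_i,e_{i+1}$ are distinct edges of a common face, the face containing $e_i,e_{i+1}$ differs from that containing $e_{i+1},e_{i+2}$, and $e_i,e_{i+2}$ have no common vertex; it is a cyclic sequence, passing through each edge in a definite direction (from the vertex shared with the previous edge to the vertex shared with the next); its reversal is a zigzag. $z$-knotted means exactly two zigzags $Z,Z^{-1}$. A $z$-orientation is a set containing exactly one of $Z,Z^{-1}$ for each zigzag $Z$; $\tau^{-1}$ is the set of reversals. For a closed $2$-cell embedding $\Gamma'$ (every face a closed disc), $\mathrm{T}(\Gamma')$ is the triangulation obtained by adding a point $v_F$ in the interior of each face $F$ and joining it to all vertices of $F$. *)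

theory Defs
  imports Main
begin

text \<open>Combinatorial model of a triangulation of a connected closed surface:
  a finite set F of faces, each face being the 3-element set of its vertices.\<close>

definition edges :: "'a set set \<Rightarrow> 'a set set" where
  "edges F = {e. card e = 2 \<and> (\<exists>f\<in>F. e \<subseteq> f)}"

definition link_connected :: "'a set set \<Rightarrow> 'a \<Rightarrow> bool" where
  "link_connected F v \<longleftrightarrow>
     (\<forall>u w. {u, v} \<in> edges F \<longrightarrow> {w, v} \<in> edges F \<longrightarrow>
        (\<lambda>x y. {v, x, y} \<in> F)\<^sup>*\<^sup>* u w)"

definition graph_connected :: "'a set set \<Rightarrow> bool" where
  "graph_connected F \<longleftrightarrow>
     (\<forall>u\<in>\<Union>F. \<forall>w\<in>\<Union>F. (\<lambda>x y. {x, y} \<in> edges F)\<^sup>*\<^sup>* u w)"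

definition triangulation :: "'a set set \<Rightarrow> bool" where
  "triangulation F \<longleftrightarrow> finite F \<and> F \<noteq> {} \<and> (\<forall>f\<in>F. card f = 3) \<and>
     (\<forall>e\<in>edges F. card {f\<in>F. e \<subseteq> f} = 2) \<and>
     (\<forall>v\<in>\<Union>F. link_connected F v) \<and> graph_connected F"

definition face_of :: "'a set set \<Rightarrow> 'a set \<Rightarrow> 'a set \<Rightarrow> 'a set" where
  "face_of F e e' = (THE f. f \<in> F \<and> e \<subseteq> f \<and> e' \<subseteq> f)"

text \<open>Zigzags as (bi-infinite, periodic = cyclic) sequences of edges.\<close>
definition zigzag :: "'a set set \<Rightarrow> (int \<Rightarrow> 'a set) \<Rightarrow> bool" where
  "zigzag F z \<longleftrightarrow> (\<exists>n>0. \<forall>i. z (i + n) = z i) \<and>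
     (\<forall>i. z i \<in> edges F \<and> z i \<noteq> z (i + 1) \<and>
          (\<exists>f\<in>F. z i \<subseteq> f \<and> z (i + 1) \<subseteq> f) \<and>
          face_of F (z i) (z (i + 1)) \<noteq> face_of F (z (i + 1)) (z (i + 2)) \<and>
          z i \<inter> z (i + 2) = {})"

definition zz_dir :: "(int \<Rightarrow> 'a set) \<Rightarrow> int \<Rightarrow> 'a \<times> 'a" where
  "zz_dir z i = ((THE x. x \<in> z (i - 1) \<inter> z i), (THE x. x \<in> z i \<inter> z (i + 1)))"

text \<open>A zigzag as a cyclic sequence = class of sequences up to shift.\<close>
definition cyc_class :: "(int \<Rightarrow> 'b) \<Rightarrow> (int \<Rightarrow> 'b) set" where
  "cyc_class z = range (\<lambda>k. (\<lambda>i. z (i + k)))"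

definition zigzags :: "'a set set \<Rightarrow> (int \<Rightarrow> 'a set) set set" where
  "zigzags F = {cyc_class z | z. zigzag F z}"

definition rev_seq :: "(int \<Rightarrow> 'b) \<Rightarrow> (int \<Rightarrow> 'b)" where
  "rev_seq z = (\<lambda>i. z (- i))"

definition rev_zz :: "(int \<Rightarrow> 'b) set \<Rightarrow> (int \<Rightarrow> 'b) set" where
  "rev_zz Z = rev_seq ` Z"

definition z_knotted :: "'a set set \<Rightarrow> bool" where
  "z_knotted F \<longleftrightarrow> (\<exists>Z. zigzags F = {Z, rev_zz Z} \<and> Z \<noteq> rev_zz Z)"

definition z_orientation :: "'a set set \<Rightarrow> (int \<Rightarrow> 'a set) set set \<Rightarrow> bool" where
  "z_orientation F \<tau> \<longleftrightarrow> \<tau> \<subseteq> zigzags F \<and>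
     (\<forall>Z\<in>zigzags F. (Z \<in> \<tau>) \<noteq> (rev_zz Z \<in> \<tau>))"

definition inv_orient :: "(int \<Rightarrow> 'b) set set \<Rightarrow> (int \<Rightarrow> 'b) set set" where
  "inv_orient \<tau> = rev_zz ` \<tau>"

text \<open>T(F): add a centre Inr f in each face f and join it to the vertices of f.\<close>
definition Tri :: "'a set set \<Rightarrow> ('a + 'a set) set set" where
  "Tri F = {insert (Inr f) (Inl ` e) | f e. f \<in> F \<and> e \<in> edges F \<and> e \<subseteq> f}"

definition interleave ::
  "(int \<Rightarrow> 'a set) \<Rightarrow> (int \<Rightarrow> ('a + 'a set) set) \<Rightarrow> (int \<Rightarrow> ('a + 'a set) set)
     \<Rightarrow> int \<Rightarrow> ('a + 'a set) set" where
  "interleave z e1 e2 k =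
     (if k mod 3 = 0 then Inl ` z (k div 3)
      else if k mod 3 = 1 then e1 (k div 3) else e2 (k div 3))"

definition interleaved ::
  "'a set set \<Rightarrow> (int \<Rightarrow> 'a set) \<Rightarrow> (int \<Rightarrow> ('a + 'a set) set) \<Rightarrow> bool" where
  "interleaved F z w \<longleftrightarrow> (\<exists>e1 e2.
     (\<forall>i. \<exists>u\<in>face_of F (z i) (z (i + 1)). e1 i = {Inr (face_of F (z i) (z (i + 1))), Inl u}) \<and>
     (\<forall>i. \<exists>u\<in>face_of F (z i) (z (i + 1)). e2 i = {Inr (face_of F (z i) (z (i + 1))), Inl u}) \<and>
     w = interleave z e1 e2)"

definition induced :: "'a set set \<Rightarrow> (int \<Rightarrow> 'a set) set set
     \<Rightarrow> (int \<Rightarrow> ('a + 'a set) set) set set" where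
  "induced F \<tau> = {W \<in> zigzags (Tri F). \<exists>Z\<in>\<tau>. \<exists>z\<in>Z. \<exists>w\<in>W. interleaved F z w}"

end

theory Submission
  imports Defs
begin

text \<open>A zigzag of a triangulation is determined by its vertex sequence s: its edges are
  {s i, s (i + 1)}, and the zigzag conditions say that {s i, s (i + 1), s (i + 2)} is a face and
  that s i, ..., s (i + 3) are pairwise distinct. In T(F), replacing each step s i, s (i + 1) by
  s (i + 1), s i, c, where c is the centre of the face {s i, s (i + 1), s (i + 2)}, yields a
  sequence of the same kind, i.e. a zigzag of T(F) that runs through the old edges backwards.
  Conversely every triangle of T(F) contains exactly one centre, so the centres occupy every
  third position of a zigzag of T(F), and every zigzag of T(F) arises in this way. Lifting
  commutes with shifts and reversal and is injective up to shift, hence induces a bijection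
  between the zigzags of F and of T(F) commuting with reversal; z-orientations and
  z-knottedness transfer along it.\<close>

definition periodic :: "(int \<Rightarrow> 'b) \<Rightarrow> bool" where
  "periodic s \<longleftrightarrow> (\<exists>n>0. \<forall>i. s (i + n) = s i)"

definition shift :: "int \<Rightarrow> (int \<Rightarrow> 'b) \<Rightarrow> int \<Rightarrow> 'b" where
  "shift k s = (\<lambda>i. s (i + k))"

lemma shift_apply [simp]: "shift k s i = s (i + k)"
  by (simp add: shift_def)

lemma shift_shift [simp]: "shift a (shift b s) = shift (a + b) s"
  by (simp add: shift_def ac_simps)

lemma shift_0 [simp]: "shift 0 s = s"
  by (simp add: shift_def)

lemma periodic_iff_shift: "periodic s \<longleftrightarrow> (\<exists>n>0. shift n s = s)"
  unfolding periodic_def shift_def by (auto simp: fun_eq_iff)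

lemma shift_period_multiple:
  assumes "shift n s = s"
  shows "shift (int k * n) s = s"
proof (induction k)
  case (Suc k)
  have "shift (int (Suc k) * n) s = shift n (shift (int k * n) s)"
    by (simp add: algebra_simps)
  then show ?case using Suc assms by simp
qed simp

lemma periodic_shift_invariant:
  assumes "periodic s"
  shows "periodic (\<lambda>i. h (shift i s))"
proof -
  obtain n where "n > 0" "shift n s = s" using assms periodic_iff_shift by blast
  then have "\<forall>i. h (shift (i + n) s) = h (shift i s)"
    by (metis add.commute shift_shift)
  with \<open>n > 0\<close> show ?thesis unfolding periodic_def by blast
qed

lemma periodic_shift: "periodic s \<Longrightarrow> periodic (shift k s)"
  using periodic_shift_invariant[of s "\<lambda>u. u k"] by (simp add: shift_def add.commute)

lemma periodic_subsample:
  assumes "periodic s" and "m > 0"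
  shows "periodic (\<lambda>i. h (s (m * i + c)))"
proof -
  obtain n where n: "n > 0" "shift n s = s" using assms(1) periodic_iff_shift by blast
  have "shift (int (nat m) * n) s = s" using shift_period_multiple[OF n(2)] .
  then have "s (j + m * n) = s j" for j
    using assms(2) by (metis shift_apply of_nat_0_le_iff nat_eq_iff2 less_le)
  then have "\<forall>i. h (s (m * (i + n) + c)) = h (s (m * i + c))"
    by (metis add.commute add.left_commute distrib_left)
  with n(1) show ?thesis unfolding periodic_def by blast
qed

lemma periodic_reflect:
  assumes "periodic s"
  shows "periodic (\<lambda>i. s (c - i))"
proof -
  obtain n where n: "n > 0" "\<forall>i. s (i + n) = s i" using assms periodic_def by blast
  then have "\<forall>i. s (c - (i + n)) = s (c - i)"
    by (metis add_diff_cancel_right' diff_diff_eq2 diff_add_eq)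
  with n(1) show ?thesis unfolding periodic_def by blast
qed

section \<open>Zigzags as vertex sequences\<close>

definition edge_seq :: "(int \<Rightarrow> 'b) \<Rightarrow> int \<Rightarrow> 'b set" where
  "edge_seq s = (\<lambda>i. {s i, s (i + 1)})"

definition triple_at :: "(int \<Rightarrow> 'b) \<Rightarrow> int \<Rightarrow> 'b set" where
  "triple_at s i = {s i, s (i + 1), s (i + 2)}"

definition vertex_zigzag :: "'b set set \<Rightarrow> (int \<Rightarrow> 'b) \<Rightarrow> bool" where
  "vertex_zigzag G s \<longleftrightarrow> periodic s \<and>
     (\<forall>i. triple_at s i \<in> G \<and> s i \<noteq> s (i + 1) \<and> s i \<noteq> s (i + 2) \<and> s i \<noteq> s (i + 3))"

definition vertex_seq :: "(int \<Rightarrow> 'b set) \<Rightarrow> int \<Rightarrow> 'b" where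
  "vertex_seq z i = (THE x. x \<in> z (i - 1) \<inter> z i)"

lemma zigzag_iff:
  "zigzag G z \<longleftrightarrow> periodic z \<and>
     (\<forall>i. z i \<in> edges G \<and> z i \<noteq> z (i + 1) \<and> (\<exists>f\<in>G. z i \<subseteq> f \<and> z (i + 1) \<subseteq> f) \<and>
          face_of G (z i) (z (i + 1)) \<noteq> face_of G (z (i + 1)) (z (i + 2)) \<and>
          z i \<inter> z (i + 2) = {})"
  unfolding zigzag_def periodic_def ..

lemma edge_seq_shift: "edge_seq (shift k s) = shift k (edge_seq s)"
  by (simp add: edge_seq_def fun_eq_iff ac_simps)

lemma vertex_zigzag_distinct:
  assumes "vertex_zigzag G s"
  shows "s i \<noteq> s (i + 1)" "s i \<noteq> s (i + 2)" "s i \<noteq> s (i + 3)"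
    "s (i + 1) \<noteq> s (i + 2)" "s (i + 1) \<noteq> s (i + 3)" "s (i + 2) \<noteq> s (i + 3)"
proof -
  have *: "\<And>j. s j \<noteq> s (j + 1) \<and> s j \<noteq> s (j + 2) \<and> s j \<noteq> s (j + 3)"
    using assms unfolding vertex_zigzag_def by blast
  show "s i \<noteq> s (i + 1)" "s i \<noteq> s (i + 2)" "s i \<noteq> s (i + 3)" using *[of i] by blast+
  show "s (i + 1) \<noteq> s (i + 2)" "s (i + 1) \<noteq> s (i + 3)" using *[of "i + 1"] by (simp_all add: ac_simps)
  show "s (i + 2) \<noteq> s (i + 3)" using *[of "i + 2"] by (simp add: ac_simps)
qed

lemma vertex_zigzag_triple: "vertex_zigzag G s \<Longrightarrow> triple_at s i \<in> G"
  unfolding vertex_zigzag_def by blast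

lemma card_triple_at: "vertex_zigzag G s \<Longrightarrow> card (triple_at s i) = 3"
  using vertex_zigzag_distinct[of G s i] by (simp add: triple_at_def)

lemma vertex_zigzag_shift:
  assumes "vertex_zigzag G s"
  shows "vertex_zigzag G (shift k s)"
  unfolding vertex_zigzag_def
proof (intro conjI allI)
  show "periodic (shift k s)" using assms periodic_shift vertex_zigzag_def by blast
  fix i
  have "triple_at (shift k s) i = triple_at s (i + k)" by (simp add: triple_at_def ac_simps)
  then show "triple_at (shift k s) i \<in> G" using vertex_zigzag_triple[OF assms] by simp
  show "shift k s i \<noteq> shift k s (i + 1)" "shift k s i \<noteq> shift k s (i + 2)"
    "shift k s i \<noteq> shift k s (i + 3)"
    using vertex_zigzag_distinct(1-3)[OF assms, of "i + k"] by (simp_all add: ac_simps)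
qed

lemma vertex_zigzag_reflect:
  assumes "vertex_zigzag G s"
  shows "vertex_zigzag G (\<lambda>i. s (1 - i))"
  unfolding vertex_zigzag_def
proof (intro conjI allI)
  show "periodic (\<lambda>i. s (1 - i))"
    using assms periodic_reflect unfolding vertex_zigzag_def by blast
  fix i :: int
  have idx: "1 - (i + 1) = - i" "1 - (i + 2) = - i - 1" "1 - (i + 3) = - i - 2"
    "- i - 1 + 1 = - i" "- i - 1 + 2 = 1 - i"
    by simp_all
  have "triple_at s (- i - 1) \<in> G" using vertex_zigzag_triple[OF assms] .
  moreover have "triple_at s (- i - 1) = triple_at (\<lambda>i. s (1 - i)) i"
    unfolding triple_at_def idx by auto
  ultimately show "triple_at (\<lambda>i. s (1 - i)) i \<in> G" by simp
  have "s (- i) \<noteq> s (1 - i)" "s (- i - 1) \<noteq> s (1 - i)" "s (- i - 2) \<noteq> s (1 - i)"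
    using vertex_zigzag_distinct(1)[OF assms, of "- i"] vertex_zigzag_distinct(2)[OF assms, of "- i - 1"]
      vertex_zigzag_distinct(3)[OF assms, of "- i - 2"]
    by simp_all
  then show "s (1 - i) \<noteq> s (1 - (i + 1))" "s (1 - i) \<noteq> s (1 - (i + 2))"
    "s (1 - i) \<noteq> s (1 - (i + 3))"
    unfolding idx by auto
qed

lemma face_of_eq_Un:
  assumes three: "\<forall>f\<in>G. card f = 3" and "e \<union> e' \<in> G" and "card (e \<union> e') = 3"
  shows "face_of G e e' = e \<union> e'"
  unfolding face_of_def
proof (rule the_equality)
  fix f assume f: "f \<in> G \<and> e \<subseteq> f \<and> e' \<subseteq> f"
  then have "card f = 3" "finite f" using three card.infinite by fastforce+
  then show "f = e \<union> e'" using card_subset_eq[of f "e \<union> e'"] f assms(3) by auto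
qed (use assms in auto)

lemma face_of_commute: "face_of G e e' = face_of G e' e"
  unfolding face_of_def by meson

lemma face_of_edge_seq:
  assumes three: "\<forall>f\<in>G. card f = 3" and s: "vertex_zigzag G s"
  shows "face_of G (edge_seq s i) (edge_seq s (i + 1)) = triple_at s i"
proof -
  have "edge_seq s i \<union> edge_seq s (i + 1) = triple_at s i"
    by (auto simp: edge_seq_def triple_at_def ac_simps)
  then show ?thesis
    using face_of_eq_Un[OF three] vertex_zigzag_triple[OF s] card_triple_at[OF s] by simp
qed

lemma edge_seq_zigzag:
  assumes three: "\<forall>f\<in>G. card f = 3" and s: "vertex_zigzag G s"
  shows "zigzag G (edge_seq s)"
  unfolding zigzag_iff
proof (intro conjI allI)
  show "periodic (edge_seq s)"
    using periodic_shift_invariant[of s "\<lambda>u. {u 0, u 1}"] s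
    by (simp add: vertex_zigzag_def edge_seq_def ac_simps)
  fix i
  note d = vertex_zigzag_distinct[OF s, of i]
  have e: "edge_seq s i = {s i, s (i + 1)}" "edge_seq s (i + 1) = {s (i + 1), s (i + 2)}"
    "edge_seq s (i + 2) = {s (i + 2), s (i + 3)}"
    by (simp_all add: edge_seq_def ac_simps)
  have sub: "edge_seq s i \<subseteq> triple_at s i" "edge_seq s (i + 1) \<subseteq> triple_at s i"
    by (auto simp: e triple_at_def)
  then show "edge_seq s i \<in> edges G"
    using vertex_zigzag_triple[OF s] d by (auto simp: edges_def e)
  show "\<exists>f\<in>G. edge_seq s i \<subseteq> f \<and> edge_seq s (i + 1) \<subseteq> f"
    using sub vertex_zigzag_triple[OF s] by blast
  show "face_of G (edge_seq s i) (edge_seq s (i + 1)) \<noteq> face_of G (edge_seq s (i + 1)) (edge_seq s (i + 2))"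
    using face_of_edge_seq[OF three s, of i] face_of_edge_seq[OF three s, of "i + 1"] d
    by (auto simp: triple_at_def ac_simps)
  show "edge_seq s i \<noteq> edge_seq s (i + 1)" "edge_seq s i \<inter> edge_seq s (i + 2) = {}"
    using d by (auto simp: e doubleton_eq_iff)
qed

lemma zz_dir_edge_seq:
  assumes "vertex_zigzag G s"
  shows "zz_dir (edge_seq s) i = (s i, s (i + 1))"
proof -
  have "s (i - 1) \<noteq> s i" "s (i - 1) \<noteq> s (i + 1)"
    using vertex_zigzag_distinct(1,2)[OF assms, of "i - 1"] by (simp_all add: ac_simps)
  then have "edge_seq s (i - 1) \<inter> edge_seq s i = {s i}"
    using vertex_zigzag_distinct(1)[OF assms, of i] by (auto simp: edge_seq_def)
  moreover have "edge_seq s i \<inter> edge_seq s (i + 1) = {s (i + 1)}"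
    using vertex_zigzag_distinct[OF assms, of i] by (auto simp: edge_seq_def ac_simps)
  ultimately show ?thesis unfolding zz_dir_def by simp
qed

lemma vertex_seq_edge_seq: "vertex_zigzag G s \<Longrightarrow> vertex_seq (edge_seq s) = s"
  using zz_dir_edge_seq by (fastforce simp: vertex_seq_def zz_dir_def)

lemma zigzagD:
  assumes "zigzag G z"
  shows "card (z i) = 2" "z i \<noteq> z (i + 1)" "\<exists>f\<in>G. z i \<subseteq> f \<and> z (i + 1) \<subseteq> f"
    "z i \<inter> z (i + 2) = {}"
  using assms unfolding zigzag_def edges_def by blast+

lemma card_two_subsets_meet:
  assumes "card e = 2" "card e' = 2" "e \<noteq> e'" "e \<subseteq> f" "e' \<subseteq> f" "card f = 3"
  shows "\<exists>x. e \<inter> e' = {x}"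
proof -
  have fin: "finite e" "finite e'" "finite f" using assms card.infinite by fastforce+
  have "card (e \<union> e') \<le> 3" using card_mono[OF fin(3), of "e \<union> e'"] assms by auto
  then have "card (e \<inter> e') \<ge> 1" using card_Un_Int[OF fin(1,2)] assms by linarith
  moreover have "card (e \<inter> e') < 2"
  proof -
    have "\<not> e \<subseteq> e'" using card_subset_eq[OF fin(2)] assms by metis
    then have "e \<inter> e' \<subset> e" by blast
    then show ?thesis using psubset_card_mono[OF fin(1)] assms(1) by simp
  qed
  ultimately show ?thesis using card_1_singleton_iff[of "e \<inter> e'"] by simp
qed

lemma zigzag_meet:
  assumes three: "\<forall>f\<in>G. card f = 3" and z: "zigzag G z"
  shows "z (i - 1) \<inter> z i = {vertex_seq z i}"
proof -
  obtain f where f: "f \<in> G" "z (i - 1) \<subseteq> f" "z i \<subseteq> f" using zigzagD(3)[OF z, of "i - 1"] by auto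
  have "z (i - 1) \<noteq> z i" using zigzagD(2)[OF z, of "i - 1"] by simp
  moreover have "card f = 3" using three f(1) by blast
  ultimately obtain x where "z (i - 1) \<inter> z i = {x}"
    using card_two_subsets_meet[OF zigzagD(1)[OF z] zigzagD(1)[OF z] _ f(2,3)] by blast
  then show ?thesis unfolding vertex_seq_def by simp
qed

lemma edge_seq_vertex_seq:
  assumes three: "\<forall>f\<in>G. card f = 3" and z: "zigzag G z"
  shows "edge_seq (vertex_seq z) = z"
proof
  fix i
  let ?s = "vertex_seq z"
  have mem: "?s i \<in> z (i - 1)" "?s i \<in> z i" "?s (i + 1) \<in> z i" "?s (i + 1) \<in> z (i + 1)"
    using zigzag_meet[OF three z, of i] zigzag_meet[OF three z, of "i + 1"] by auto
  have "z (i - 1) \<inter> z (i + 1) = {}" using zigzagD(4)[OF z, of "i - 1"] by (simp add: ac_simps)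
  then have "?s i \<noteq> ?s (i + 1)" using mem(1,4) by (metis IntI empty_iff)
  then have "card {?s i, ?s (i + 1)} = card (z i)" using zigzagD(1)[OF z, of i] by simp
  moreover have "finite (z i)" using zigzagD(1)[OF z, of i] card.infinite by fastforce
  moreover have "{?s i, ?s (i + 1)} \<subseteq> z i" using mem(2,3) by simp
  ultimately have "{?s i, ?s (i + 1)} = z i" using card_subset_eq by metis
  then show "edge_seq ?s i = z i" by (simp add: edge_seq_def)
qed

lemma vertex_zigzag_vertex_seq:
  assumes three: "\<forall>f\<in>G. card f = 3" and z: "zigzag G z"
  shows "vertex_zigzag G (vertex_seq z)"
  unfolding vertex_zigzag_def
proof (intro conjI allI)
  define h :: "(int \<Rightarrow> 'a set) \<Rightarrow> 'a" where "h u = (THE x. x \<in> u (- 1) \<inter> u 0)" for u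
  have "vertex_seq z = (\<lambda>i. h (shift i z))" by (simp add: fun_eq_iff vertex_seq_def h_def)
  moreover have "periodic z" using z zigzag_iff by blast
  ultimately show "periodic (vertex_seq z)" using periodic_shift_invariant by metis
  fix i
  let ?s = "vertex_seq z"
  have e: "z j = {?s j, ?s (j + 1)}" for j
    using edge_seq_vertex_seq[OF three z] by (auto simp: edge_seq_def fun_eq_iff)
  have "z i \<inter> z (i + 2) = {}" using zigzagD(4)[OF z] .
  then have disj: "{?s i, ?s (i + 1)} \<inter> {?s (i + 2), ?s (i + 3)} = {}"
    using e[of i] e[of "i + 2"] by (simp add: ac_simps)
  have "card (z i) = 2" using zigzagD(1)[OF z] .
  then have "?s i \<noteq> ?s (i + 1)" using e[of i] by auto
  then show "?s i \<noteq> ?s (i + 1)" "?s i \<noteq> ?s (i + 2)" "?s i \<noteq> ?s (i + 3)"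
    using disj by auto
  obtain f where f: "f \<in> G" "z i \<subseteq> f" "z (i + 1) \<subseteq> f" using zigzagD(3)[OF z] by blast
  have sub: "triple_at ?s i \<subseteq> f"
    using f e[of i] e[of "i + 1"] by (auto simp: triple_at_def ac_simps)
  have "card (triple_at ?s i) = 3"
    using disj \<open>?s i \<noteq> ?s (i + 1)\<close> by (auto simp: triple_at_def)
  moreover have "card f = 3" "finite f" using three f(1) card.infinite by fastforce+
  ultimately have "triple_at ?s i = f" using card_subset_eq[OF _ sub] by simp
  then show "triple_at ?s i \<in> G" using f(1) by simp
qed

lemma triangulation_card: "triangulation F \<Longrightarrow> \<forall>f\<in>F. card f = 3"
  unfolding triangulation_def by blast

lemma Tri_memE:
  assumes "X \<in> Tri F"
  obtains f where "f \<in> F" "Inr f \<in> X" "\<And>x. x \<in> X \<Longrightarrow> x = Inr f \<or> (\<exists>a\<in>f. x = Inl a)"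
  using assms unfolding Tri_def by blast

lemma card_Tri: "\<forall>X\<in>Tri F. card X = 3"
proof
  fix X assume "X \<in> Tri F"
  then obtain f e where X: "X = insert (Inr f) (Inl ` e)" and e: "card e = 2"
    unfolding Tri_def edges_def by blast
  then have "finite e" using card.infinite by fastforce
  then show "card X = 3" using e unfolding X by (subst card_insert_disjoint) (auto simp: card_image)
qed

lemma insert_Tri:
  assumes "f \<in> F" "a \<in> f" "b \<in> f" "a \<noteq> b"
  shows "{Inr f, Inl a, Inl b} \<in> Tri F"
proof -
  have "{a, b} \<in> edges F" using assms unfolding edges_def by auto
  then have "insert (Inr f) (Inl ` {a, b}) \<in> Tri F" using assms unfolding Tri_def by blast
  then show ?thesis by simp
qed

lemma Tri_vertex: "X \<in> Tri F \<Longrightarrow> Inr f \<in> X \<Longrightarrow> Inl a \<in> X \<Longrightarrow> f \<in> F \<and> a \<in> f"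
  unfolding Tri_def by blast

lemma Tri_one_centre:
  assumes "{x, y, u} \<in> Tri F" "x \<noteq> y" "x \<noteq> u" "y \<noteq> u"
  shows "\<not> isl x \<longleftrightarrow> isl y \<and> isl u"
  using assms(1)
proof (rule Tri_memE)
  fix f assume f: "Inr f \<in> {x, y, u}" and "\<And>v. v \<in> {x, y, u} \<Longrightarrow> v = Inr f \<or> (\<exists>a\<in>f. v = Inl a)"
  then have "\<not> isl v \<longleftrightarrow> v = Inr f" if "v \<in> {x, y, u}" for v
    using that by fastforce
  then show ?thesis using f assms(2-4) by auto
qed

section \<open>Lifting zigzags to T(F)\<close>

lemma int_mod3_cases:
  fixes k :: int
  obtains q where "k = 3 * q" | q where "k = 3 * q + 1" | q where "k = 3 * q + 2"
proof -
  have "k = 3 * (k div 3) + k mod 3" by simp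
  moreover have "k mod 3 = 0 \<or> k mod 3 = 1 \<or> k mod 3 = 2" by auto
  ultimately show ?thesis using that by (metis add.right_neutral)
qed

text \<open>For a vertex sequence s of a zigzag, the lifted vertex sequence is
  s 1, s 0, c 0, s 2, s 1, c 1, s 3, s 2, c 2, ..., where c q is the centre of the face
  triple_at s q: every edge of the zigzag is run through backwards and followed by the
  two edges through the centre of the face it shares with the next edge.\<close>
definition tri_lift :: "(int \<Rightarrow> 'a) \<Rightarrow> int \<Rightarrow> 'a + 'a set" where
  "tri_lift s k =
     (if k mod 3 = 0 then Inl (s (k div 3 + 1))
      else if k mod 3 = 1 then Inl (s (k div 3))
      else Inr (triple_at s (k div 3)))"

lemma tri_lift_eqI:
  assumes "\<And>i. t (3 * i) = Inl (s (i + 1))" "\<And>i. t (3 * i + 1) = Inl (s i)"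
    "\<And>i. t (3 * i + 2) = Inr (triple_at s i)"
  shows "t = tri_lift s"
proof
  fix k show "t k = tri_lift s k"
    by (cases k rule: int_mod3_cases) (simp_all add: assms tri_lift_def)
qed

lemma tri_lift_shift: "tri_lift (shift k s) = shift (3 * k) (tri_lift s)"
proof
  fix j
  have "(j + 3 * k) div 3 = j div 3 + k" "(j + 3 * k) mod 3 = j mod 3" by simp_all
  then show "tri_lift (shift k s) j = shift (3 * k) (tri_lift s) j"
    by (simp add: tri_lift_def triple_at_def ac_simps)
qed

lemma vertex_zigzag_tri_lift:
  assumes s: "vertex_zigzag F s"
  shows "vertex_zigzag (Tri F) (tri_lift s)"
  unfolding vertex_zigzag_def
proof (intro conjI allI)
  obtain n where "n > 0" "shift n s = s" using s periodic_iff_shift vertex_zigzag_def by metis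
  then have "3 * n > 0" "shift (3 * n) (tri_lift s) = tri_lift s" by (simp_all flip: tri_lift_shift)
  then show "periodic (tri_lift s)" using periodic_iff_shift by blast
  fix k
  let ?t = "tri_lift s"
  have T: "triple_at s q \<in> F" "s q \<in> triple_at s q" "s (q + 1) \<in> triple_at s q"
    "s (q + 2) \<in> triple_at s q" for q
    using vertex_zigzag_triple[OF s] by (auto simp: triple_at_def)
  note d = vertex_zigzag_distinct[OF s]
  have "s q \<notin> triple_at s (q + 1)" for q
    using d(1-3)[of q] by (auto simp: triple_at_def ac_simps)
  then have T': "triple_at s q \<noteq> triple_at s (q + 1)" for q using T(2) by blast
  have "triple_at ?t k \<in> Tri F \<and> ?t k \<noteq> ?t (k + 1) \<and> ?t k \<noteq> ?t (k + 2) \<and> ?t k \<noteq> ?t (k + 3)"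
  proof (cases k rule: int_mod3_cases)
    case (1 q)
    have "{Inr (triple_at s q), Inl (s (q + 1)), Inl (s q)} \<in> Tri F"
      using insert_Tri[OF T(1,3,2)] d(1)[of q] by metis
    then show ?thesis using 1 d[of q] by (simp add: tri_lift_def triple_at_def insert_commute ac_simps)
  next
    case (2 q)
    have "{Inr (triple_at s q), Inl (s q), Inl (s (q + 2))} \<in> Tri F"
      using insert_Tri[OF T(1,2,4)] d(2)[of q] by metis
    then show ?thesis using 2 d[of q] by (simp add: tri_lift_def triple_at_def insert_commute ac_simps)
  next
    case (3 q)
    have "{Inr (triple_at s q), Inl (s (q + 2)), Inl (s (q + 1))} \<in> Tri F"
      using insert_Tri[OF T(1,4,3)] d(4)[of q] by metis
    then show ?thesis using 3 T'[of q] by (simp add: tri_lift_def triple_at_def insert_commute ac_simps)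
  qed
  then show "triple_at ?t k \<in> Tri F" "?t k \<noteq> ?t (k + 1)" "?t k \<noteq> ?t (k + 2)" "?t k \<noteq> ?t (k + 3)"
    by blast+
qed

definition lift_zigzag :: "(int \<Rightarrow> 'a set) \<Rightarrow> int \<Rightarrow> ('a + 'a set) set" where
  "lift_zigzag z = edge_seq (tri_lift (vertex_seq z))"

lemma lift_zigzag_edge_seq: "vertex_zigzag G s \<Longrightarrow> lift_zigzag (edge_seq s) = edge_seq (tri_lift s)"
  by (simp add: lift_zigzag_def vertex_seq_edge_seq)

lemma zigzag_lift_zigzag:
  assumes three: "\<forall>f\<in>F. card f = 3" and z: "zigzag F z"
  shows "zigzag (Tri F) (lift_zigzag z)"
  unfolding lift_zigzag_def
  using edge_seq_zigzag[OF card_Tri vertex_zigzag_tri_lift[OF vertex_zigzag_vertex_seq[OF three z]]] .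

lemma zz_dir_lift_zigzag:
  assumes three: "\<forall>f\<in>F. card f = 3" and z: "zigzag F z"
  shows "zz_dir (lift_zigzag z) (3 * i) = (Inl (snd (zz_dir z i)), Inl (fst (zz_dir z i)))"
proof -
  let ?s = "vertex_seq z"
  have s: "vertex_zigzag F ?s" using vertex_zigzag_vertex_seq[OF three z] .
  have "zz_dir (lift_zigzag z) (3 * i) = (tri_lift ?s (3 * i), tri_lift ?s (3 * i + 1))"
    unfolding lift_zigzag_def using zz_dir_edge_seq[OF vertex_zigzag_tri_lift[OF s]] .
  moreover have "zz_dir z i = (?s i, ?s (i + 1))"
    using zz_dir_edge_seq[OF s] edge_seq_vertex_seq[OF three z] by simp
  ultimately show ?thesis by (simp add: tri_lift_def)
qed

lemma edge_seq_tri_lift: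
  "edge_seq (tri_lift s) =
     interleave (edge_seq s) (\<lambda>q. {Inr (triple_at s q), Inl (s q)}) (\<lambda>q. {Inr (triple_at s q), Inl (s (q + 2))})"
proof
  fix k
  show "edge_seq (tri_lift s) k =
     interleave (edge_seq s) (\<lambda>q. {Inr (triple_at s q), Inl (s q)}) (\<lambda>q. {Inr (triple_at s q), Inl (s (q + 2))}) k"
    by (cases k rule: int_mod3_cases)
      (auto simp: edge_seq_def tri_lift_def interleave_def ac_simps)
qed

lemma interleaved_lift_zigzag:
  assumes three: "\<forall>f\<in>F. card f = 3" and z: "zigzag F z"
  shows "interleaved F z (lift_zigzag z)"
proof -
  let ?s = "vertex_seq z"
  have s: "vertex_zigzag F ?s" using vertex_zigzag_vertex_seq[OF three z] .
  have z_eq: "z = edge_seq ?s" using edge_seq_vertex_seq[OF three z] by simp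
  have face: "face_of F (z i) (z (i + 1)) = triple_at ?s i" for i
    using face_of_edge_seq[OF three s] z_eq by metis
  show ?thesis
    unfolding interleaved_def face
  proof (intro exI conjI)
    show "lift_zigzag z = interleave z (\<lambda>q. {Inr (triple_at ?s q), Inl (?s q)})
        (\<lambda>q. {Inr (triple_at ?s q), Inl (?s (q + 2))})"
      unfolding lift_zigzag_def edge_seq_tri_lift by (simp flip: z_eq)
  qed (auto simp: triple_at_def)
qed

text \<open>Each of the two edges through a centre is forced, since a zigzag edge must be disjoint
  from the edge two steps ahead and two steps back.\<close>
lemma interleaved_zigzag_unique:
  assumes three: "\<forall>f\<in>F. card f = 3" and z: "zigzag F z" and w: "zigzag (Tri F) w"
    and zw: "interleaved F z w"
  shows "w = lift_zigzag z"
proof -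
  let ?s = "vertex_seq z"
  have s: "vertex_zigzag F ?s" using vertex_zigzag_vertex_seq[OF three z] .
  have z_eq: "z = edge_seq ?s" using edge_seq_vertex_seq[OF three z] by simp
  have face: "face_of F (z i) (z (i + 1)) = triple_at ?s i" for i
    using face_of_edge_seq[OF three s] z_eq by metis
  obtain e1 e2
    where e1: "\<forall>i. \<exists>u\<in>triple_at ?s i. e1 i = {Inr (triple_at ?s i), Inl u}"
      and e2: "\<forall>i. \<exists>u\<in>triple_at ?s i. e2 i = {Inr (triple_at ?s i), Inl u}"
      and w_eq: "w = interleave z e1 e2"
    using zw unfolding interleaved_def face by blast
  have z_at: "z j = {?s j, ?s (j + 1)}" for j by (subst z_eq) (simp add: edge_seq_def)
  have disj: "w k \<inter> w (k + 2) = {}" for k using zigzagD(4)[OF w] .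
  have "e1 i = {Inr (triple_at ?s i), Inl (?s i)}" for i
  proof -
    obtain u where u: "u \<in> triple_at ?s i" "e1 i = {Inr (triple_at ?s i), Inl u}" using e1 by blast
    have "e1 i \<inter> Inl ` z (i + 1) = {}"
      using disj[of "3 * i + 1"] by (simp add: w_eq interleave_def ac_simps)
    then have "u \<noteq> ?s (i + 1)" "u \<noteq> ?s (i + 2)"
      using u(2) z_at[of "i + 1"] by (auto simp: ac_simps)
    then show ?thesis using u by (auto simp: triple_at_def)
  qed
  moreover have "e2 i = {Inr (triple_at ?s i), Inl (?s (i + 2))}" for i
  proof -
    obtain u where u: "u \<in> triple_at ?s i" "e2 i = {Inr (triple_at ?s i), Inl u}" using e2 by blast
    have "Inl ` z i \<inter> e2 i = {}"
      using disj[of "3 * i"] by (simp add: w_eq interleave_def)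
    then have "u \<noteq> ?s i" "u \<noteq> ?s (i + 1)"
      using u(2) z_at[of i] by auto
    then show ?thesis using u by (auto simp: triple_at_def)
  qed
  ultimately have "w = interleave z (\<lambda>q. {Inr (triple_at ?s q), Inl (?s q)})
      (\<lambda>q. {Inr (triple_at ?s q), Inl (?s (q + 2))})"
    unfolding w_eq by presburger
  then show ?thesis unfolding lift_zigzag_def edge_seq_tri_lift by (simp flip: z_eq)
qed

section \<open>Every zigzag of T(F) is a lift\<close>

lemma vertex_zigzag_of_tri_lift:
  assumes t: "vertex_zigzag (Tri F) (tri_lift s)"
  shows "vertex_zigzag F s"
  unfolding vertex_zigzag_def
proof (intro conjI allI)
  have "periodic (\<lambda>i. projl (tri_lift s (3 * i + 1)))"
    using t periodic_subsample[of "tri_lift s" 3 projl 1] unfolding vertex_zigzag_def by simp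
  then show "periodic s" by (simp add: tri_lift_def)
  fix i
  note d = vertex_zigzag_distinct[OF t]
  have "triple_at (tri_lift s) (3 * i) \<in> Tri F" using vertex_zigzag_triple[OF t] .
  then show "triple_at s i \<in> F"
    using Tri_vertex[of _ F "triple_at s i" "s i"] by (simp add: triple_at_def tri_lift_def)
  show "s i \<noteq> s (i + 1)" using d(1)[of "3 * i"] by (simp add: tri_lift_def)
  show "s i \<noteq> s (i + 2)" using d(5)[of "3 * i"] by (simp add: tri_lift_def ac_simps)
  have "triple_at s i \<noteq> triple_at s (i + 1)" using d(3)[of "3 * i + 2"] by (simp add: tri_lift_def ac_simps)
  then show "s i \<noteq> s (i + 3)" by (auto simp: triple_at_def ac_simps insert_commute)
qed

text \<open>Every triangle of Tri F has exactly one centre, and consecutive triangles of a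
  vertex zigzag share two vertices; so centres occur in it with period three.\<close>
lemma vertex_zigzag_Tri_centres:
  assumes t: "vertex_zigzag (Tri F) t"
  obtains r where "\<And>i. \<not> isl (t (3 * i + r))"
proof -
  note d = vertex_zigzag_distinct[OF t]
  have one_centre: "\<not> isl (t k) \<longleftrightarrow> isl (t (k + 1)) \<and> isl (t (k + 2))"
    "\<not> isl (t (k + 2)) \<longleftrightarrow> isl (t k) \<and> isl (t (k + 1))" for k
    using Tri_one_centre[of "t k" "t (k + 1)" "t (k + 2)" F] Tri_one_centre[of "t (k + 2)" "t k" "t (k + 1)" F]
      vertex_zigzag_triple[OF t, of k] d[of k]
    by (simp_all add: triple_at_def insert_commute)
  have step: "isl (t (k + 3)) \<longleftrightarrow> isl (t k)" for k
  proof -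
    have "\<not> isl (t (k + 3)) \<longleftrightarrow> isl (t (k + 1)) \<and> isl (t (k + 2))"
      using one_centre(2)[of "k + 1"] by (simp add: add.assoc)
    then show ?thesis using one_centre(1)[of k] by blast
  qed
  obtain r where r: "\<not> isl (t r)" using one_centre(1)[of 0] by blast
  have "isl (t (3 * i + r)) \<longleftrightarrow> isl (t r)" for i
  proof (induction i rule: int_induct[where k = 0])
    case (step1 i)
    then show ?case using step[of "3 * i + r"] by (simp add: algebra_simps)
  next
    case (step2 i)
    then show ?case using step[of "3 * (i - 1) + r"] by (simp add: algebra_simps)
  qed simp
  with r that show thesis by blast
qed

lemma Tri_centre_fan:
  assumes three: "\<forall>f\<in>F. card f = 3"
    and T: "{Inl a, Inl b, Inr g} \<in> Tri F" "{Inl b, Inr g, Inl a'} \<in> Tri F" "{Inr g, Inl a', Inl b'} \<in> Tri F"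
    and ne: "a \<noteq> b" "b \<noteq> a'" "a \<noteq> a'" "b \<noteq> b'" "a' \<noteq> b'"
  shows "g = {a, b, a'} \<and> b' = a"
proof -
  have vert: "g \<in> F" "a \<in> g" "b \<in> g" "a' \<in> g" "b' \<in> g"
    using Tri_vertex[OF T(1), of g a] Tri_vertex[OF T(1), of g b] Tri_vertex[OF T(2), of g a']
      Tri_vertex[OF T(3), of g b']
    by simp_all
  have "card g = 3" "finite g" using three vert(1) card.infinite by fastforce+
  moreover have "{a, b, a'} \<subseteq> g" "card {a, b, a'} = 3" using vert ne by auto
  ultimately have "g = {a, b, a'}" using card_subset_eq[of g "{a, b, a'}"] by simp
  with vert(5) ne show ?thesis by auto
qed

lemma vertex_zigzag_Tri_eq_tri_lift:
  assumes three: "\<forall>f\<in>F. card f = 3" and t: "vertex_zigzag (Tri F) t"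
    and centres: "\<And>i. \<not> isl (t (3 * i + 2))"
  shows "t = tri_lift (\<lambda>i. projl (t (3 * i + 1)))"
proof -
  note d = vertex_zigzag_distinct[OF t]
  define a where "a i = projl (t (3 * i))" for i
  define b where "b i = projl (t (3 * i + 1))" for i
  define g where "g i = projr (t (3 * i + 2))" for i
  have tri: "triple_at t k \<in> Tri F" for k using vertex_zigzag_triple[OF t] .
  have "isl (t (3 * i)) \<and> isl (t (3 * i + 1))" for i
    using Tri_one_centre[of "t (3 * i + 2)" "t (3 * i)" "t (3 * i + 1)" F] tri[of "3 * i"]
      d(1,2,4)[of "3 * i"] centres[of i]
    by (simp add: triple_at_def insert_commute ac_simps)
  then have ta: "t (3 * i) = Inl (a i)" and tb: "t (3 * i + 1) = Inl (b i)"
    and tg: "t (3 * i + 2) = Inr (g i)" for i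
    using centres[of i] by (simp_all add: a_def b_def g_def sum.collapse)
  have face: "g i = {a i, b i, a (i + 1)} \<and> b (i + 1) = a i" for i
  proof -
    have idx: "3 * i + 1 + 1 = 3 * i + 2" "3 * i + 1 + 2 = 3 * i + 3" "3 * i + 2 + 1 = 3 * i + 3"
      "3 * i + 2 + 2 = 3 * i + 4"
      by simp_all
    have succ: "t (3 * i + 3) = Inl (a (i + 1))" "t (3 * i + 4) = Inl (b (i + 1))"
      using ta[of "i + 1"] tb[of "i + 1"] by (simp_all add: algebra_simps)
    have T: "{Inl (a i), Inl (b i), Inr (g i)} \<in> Tri F" "{Inl (b i), Inr (g i), Inl (a (i + 1))} \<in> Tri F"
      "{Inr (g i), Inl (a (i + 1)), Inl (b (i + 1))} \<in> Tri F"
      using tri[of "3 * i"] tri[of "3 * i + 1"] tri[of "3 * i + 2"]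
      unfolding triple_at_def idx by (simp_all only: ta tb tg succ)
    have "t (3 * i) \<noteq> t (3 * i + 1)" "t (3 * i + 1) \<noteq> t (3 * i + 3)" "t (3 * i) \<noteq> t (3 * i + 3)"
      "t (3 * i + 1) \<noteq> t (3 * i + 4)" "t (3 * i + 3) \<noteq> t (3 * i + 4)"
      using d(1,3)[of "3 * i"] d(5)[of "3 * i"] d(3)[of "3 * i + 1"] d(1)[of "3 * i + 3"]
      by (simp_all add: add.assoc)
    then show ?thesis using Tri_centre_fan[OF three T] by (simp add: ta tb succ)
  qed
  have "b (i + 1) = a i" "triple_at b i = g i" for i
  proof -
    have "i + 1 + 1 = i + 2" by simp
    then have "b (i + 1) = a i" "b (i + 2) = a (i + 1)" using face[of i] face[of "i + 1"] by metis+
    then show "b (i + 1) = a i" "triple_at b i = g i"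
      using face[of i] by (simp_all add: triple_at_def insert_commute)
  qed
  then have "t = tri_lift b" using ta tb tg by (intro tri_lift_eqI) simp_all
  moreover have "(\<lambda>i. projl (t (3 * i + 1))) = b" by (simp add: b_def fun_eq_iff)
  ultimately show ?thesis by simp
qed

lemma zigzag_Tri_shift_lift:
  assumes three: "\<forall>f\<in>F. card f = 3" and w: "zigzag (Tri F) w"
  obtains z k where "zigzag F z" "w = shift k (lift_zigzag z)"
proof -
  let ?t = "vertex_seq w"
  have t: "vertex_zigzag (Tri F) ?t" using vertex_zigzag_vertex_seq[OF card_Tri w] .
  obtain r where r: "\<And>i. \<not> isl (?t (3 * i + r))" using vertex_zigzag_Tri_centres[OF t] by blast
  define t' where "t' = shift (r - 2) ?t"
  define s where "s i = projl (t' (3 * i + 1))" for i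
  have t': "vertex_zigzag (Tri F) t'" unfolding t'_def using vertex_zigzag_shift[OF t] .
  have "\<not> isl (t' (3 * i + 2))" for i using r[of i] by (simp add: t'_def)
  then have t'_eq: "t' = tri_lift s"
    using vertex_zigzag_Tri_eq_tri_lift[OF three t'] by (simp add: s_def[abs_def])
  then have s: "vertex_zigzag F s" using vertex_zigzag_of_tri_lift t' by blast
  have "lift_zigzag (edge_seq s) = shift (r - 2) w"
    using lift_zigzag_edge_seq[OF s] edge_seq_vertex_seq[OF card_Tri w]
    by (simp add: t'_eq [symmetric] t'_def edge_seq_shift)
  then have "w = shift (2 - r) (lift_zigzag (edge_seq s))" by simp
  with edge_seq_zigzag[OF three s] that show thesis by blast
qed

section \<open>Zigzags up to shift and reversal\<close>

lemma cyc_class_iff: "u \<in> cyc_class z \<longleftrightarrow> (\<exists>k. u = shift k z)"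
  by (auto simp: cyc_class_def shift_def)

lemma cyc_class_shift [simp]: "cyc_class (shift k z) = cyc_class z"
  unfolding cyc_class_iff set_eq_iff by (metis add_diff_cancel_right' diff_add_cancel shift_shift)

lemma cyc_class_eq_iff: "cyc_class u = cyc_class z \<longleftrightarrow> u \<in> cyc_class z"
  by (metis cyc_class_iff cyc_class_shift shift_0)

lemma rev_seq_shift: "rev_seq (shift k z) = shift (- k) (rev_seq z)"
  by (simp add: rev_seq_def shift_def fun_eq_iff algebra_simps)

lemma rev_zz_cyc_class: "rev_zz (cyc_class z) = cyc_class (rev_seq z)"
proof -
  have "(\<exists>k. u = rev_seq (shift k z)) \<longleftrightarrow> (\<exists>k. u = shift k (rev_seq z))" for u
    unfolding rev_seq_shift by (metis minus_minus)
  then show ?thesis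
    unfolding rev_zz_def set_eq_iff cyc_class_iff by (metis (no_types, lifting) image_iff cyc_class_iff)
qed

lemma zigzag_shift:
  assumes "zigzag G z"
  shows "zigzag G (shift k z)"
proof -
  define P where "P u \<longleftrightarrow> u 0 \<in> edges G \<and> u 0 \<noteq> u 1 \<and> (\<exists>f\<in>G. u 0 \<subseteq> f \<and> u 1 \<subseteq> f) \<and>
      face_of G (u 0) (u 1) \<noteq> face_of G (u 1) (u 2) \<and> u 0 \<inter> u 2 = {}" for u :: "int \<Rightarrow> 'a set"
  have iff: "zigzag G u \<longleftrightarrow> periodic u \<and> (\<forall>i. P (shift i u))" for u
    unfolding zigzag_iff P_def by (simp add: ac_simps)
  then show ?thesis using assms periodic_shift by (metis shift_shift)
qed

lemma zigzag_rev_seq: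
  assumes three: "\<forall>f\<in>G. card f = 3" and z: "zigzag G z"
  shows "zigzag G (rev_seq z)"
proof -
  let ?s = "vertex_seq z"
  have z_at: "z j = {?s j, ?s (j + 1)}" for j
    using edge_seq_vertex_seq[OF three z] by (auto simp: edge_seq_def fun_eq_iff)
  have "rev_seq z i = edge_seq (\<lambda>i. ?s (1 - i)) i" for i
  proof -
    have "- i + 1 = 1 - i" "1 - (i + 1) = - i" by simp_all
    then show ?thesis by (simp add: rev_seq_def edge_seq_def z_at insert_commute)
  qed
  then have "rev_seq z = edge_seq (\<lambda>i. ?s (1 - i))" by blast
  then show ?thesis
    using edge_seq_zigzag[OF three vertex_zigzag_reflect[OF vertex_zigzag_vertex_seq[OF three z]]] by simp
qed

lemma zigzags_rev_zz:
  assumes three: "\<forall>f\<in>G. card f = 3" and Z: "Z \<in> zigzags G"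
  shows "rev_zz Z \<in> zigzags G"
proof -
  obtain z where "Z = cyc_class z" "zigzag G z" using Z unfolding zigzags_def by blast
  then show ?thesis
    using zigzag_rev_seq[OF three] unfolding zigzags_def by (auto simp: rev_zz_cyc_class)
qed

lemma zigzags_memD: "Z \<in> zigzags G \<Longrightarrow> z \<in> Z \<Longrightarrow> zigzag G z"
  unfolding zigzags_def by (auto simp: cyc_class_iff zigzag_shift)

lemma vertex_seq_shift: "vertex_seq (shift k z) = shift k (vertex_seq z)"
  by (simp add: vertex_seq_def fun_eq_iff algebra_simps)

lemma lift_zigzag_shift: "lift_zigzag (shift k z) = shift (3 * k) (lift_zigzag z)"
  by (simp add: lift_zigzag_def vertex_seq_shift tri_lift_shift edge_seq_shift)

lemma rev_seq_interleave:
  "rev_seq (interleave z e1 e2) = interleave (rev_seq z) (\<lambda>i. e2 (- i - 1)) (\<lambda>i. e1 (- i - 1))"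
proof
  fix k
  show "rev_seq (interleave z e1 e2) k = interleave (rev_seq z) (\<lambda>i. e2 (- i - 1)) (\<lambda>i. e1 (- i - 1)) k"
  proof (cases k rule: int_mod3_cases)
    case (1 q)
    then have "k mod 3 = 0" "k div 3 = q" "(- k) mod 3 = 0" "(- k) div 3 = - q" by simp_all
    then show ?thesis by (simp add: rev_seq_def interleave_def)
  next
    case (2 q)
    then have "(- k) mod 3 = 2" "(- k) div 3 = - q - 1" by presburger+
    moreover have "k mod 3 = 1" "k div 3 = q" using 2 by simp_all
    ultimately show ?thesis by (simp add: rev_seq_def interleave_def)
  next
    case (3 q)
    then have "(- k) mod 3 = 1" "(- k) div 3 = - q - 1" by presburger+
    moreover have "k mod 3 = 2" "k div 3 = q" using 3 by simp_all
    ultimately show ?thesis by (simp add: rev_seq_def interleave_def)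
  qed
qed

lemma interleaved_rev_seq:
  assumes "interleaved F z w"
  shows "interleaved F (rev_seq z) (rev_seq w)"
proof -
  obtain e1 e2
    where e1: "\<forall>i. \<exists>u\<in>face_of F (z i) (z (i + 1)). e1 i = {Inr (face_of F (z i) (z (i + 1))), Inl u}"
      and e2: "\<forall>i. \<exists>u\<in>face_of F (z i) (z (i + 1)). e2 i = {Inr (face_of F (z i) (z (i + 1))), Inl u}"
      and w: "w = interleave z e1 e2"
    using assms unfolding interleaved_def by blast
  have face: "face_of F (rev_seq z i) (rev_seq z (i + 1)) = face_of F (z (- i - 1)) (z (- i - 1 + 1))" for i
    by (simp add: rev_seq_def face_of_commute)
  have "\<exists>u\<in>face_of F (z (- i - 1)) (z (- i - 1 + 1)). j (- i - 1) =
      {Inr (face_of F (z (- i - 1)) (z (- i - 1 + 1))), Inl u}" if "j = e1 \<or> j = e2" for i j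
    using e1 e2 that by blast
  then show ?thesis
    unfolding interleaved_def face
  proof (intro exI conjI)
    show "rev_seq w = interleave (rev_seq z) (\<lambda>i. e2 (- i - 1)) (\<lambda>i. e1 (- i - 1))"
      by (simp add: w rev_seq_interleave)
  qed blast+
qed

lemma lift_zigzag_rev_seq:
  assumes three: "\<forall>f\<in>F. card f = 3" and z: "zigzag F z"
  shows "lift_zigzag (rev_seq z) = rev_seq (lift_zigzag z)"
proof -
  have "zigzag (Tri F) (rev_seq (lift_zigzag z))"
    using zigzag_rev_seq[OF card_Tri zigzag_lift_zigzag[OF three z]] .
  moreover have "interleaved F (rev_seq z) (rev_seq (lift_zigzag z))"
    using interleaved_rev_seq[OF interleaved_lift_zigzag[OF three z]] .
  ultimately show ?thesis
    using interleaved_zigzag_unique[OF three zigzag_rev_seq[OF three z]] by simp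
qed

lemma zigzags_eq_cyc_class: "Z \<in> zigzags G \<Longrightarrow> z \<in> Z \<Longrightarrow> Z = cyc_class z"
  unfolding zigzags_def using cyc_class_eq_iff by blast

lemma lift_zigzag_mult3:
  assumes three: "\<forall>f\<in>F. card f = 3" and z: "zigzag F z"
  shows "lift_zigzag z (3 * i) = Inl ` z i"
proof -
  have "z i = {vertex_seq z i, vertex_seq z (i + 1)}"
    using edge_seq_vertex_seq[OF three z] by (auto simp: edge_seq_def fun_eq_iff)
  then show ?thesis by (simp add: lift_zigzag_def edge_seq_def tri_lift_def insert_commute)
qed

lemma lift_zigzag_centre: "k mod 3 \<noteq> 0 \<Longrightarrow> \<exists>f. Inr f \<in> lift_zigzag z k"
  by (cases k rule: int_mod3_cases) (auto simp: lift_zigzag_def edge_seq_def tri_lift_def)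

text \<open>Edges of the form Inl ` e sit exactly at the positions divisible by three, so a shift
  relating two lifted zigzags is a multiple of three.\<close>
lemma cyc_class_lift_zigzag_eq:
  assumes three: "\<forall>f\<in>F. card f = 3" and z: "zigzag F z" and z': "zigzag F z'"
    and eq: "cyc_class (lift_zigzag z') = cyc_class (lift_zigzag z)"
  shows "cyc_class z' = cyc_class z"
proof -
  obtain c where c: "lift_zigzag z' = shift c (lift_zigzag z)"
    using eq cyc_class_eq_iff cyc_class_iff by metis
  have "lift_zigzag z c = Inl ` z' 0"
    using lift_zigzag_mult3[OF three z', of 0] c by simp
  then have "c mod 3 = 0" using lift_zigzag_centre[of c z] by auto
  then obtain q where q: "c = 3 * q" by auto
  have "Inl ` z' i = (Inl ` z (i + q) :: ('a + 'a set) set)" for i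
    using lift_zigzag_mult3[OF three z', of i] lift_zigzag_mult3[OF three z, of "i + q"]
    by (simp add: c q algebra_simps)
  then have "z' = shift q z" by (simp add: fun_eq_iff inj_image_eq_iff)
  then show ?thesis by simp
qed

definition lift_class :: "(int \<Rightarrow> 'a set) set \<Rightarrow> (int \<Rightarrow> ('a + 'a set) set) set" where
  "lift_class Z = (\<Union>z\<in>Z. cyc_class (lift_zigzag z))"

lemma lift_class_cyc_class: "lift_class (cyc_class z) = cyc_class (lift_zigzag z)"
proof -
  have "cyc_class (lift_zigzag u) = cyc_class (lift_zigzag z)" if "u \<in> cyc_class z" for u
    using that by (auto simp: cyc_class_iff lift_zigzag_shift)
  moreover have "z \<in> cyc_class z" using cyc_class_eq_iff by blast
  ultimately show ?thesis unfolding lift_class_def by blast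
qed

lemma lift_class_zigzags:
  assumes three: "\<forall>f\<in>F. card f = 3"
  shows "bij_betw lift_class (zigzags F) (zigzags (Tri F))"
  unfolding bij_betw_def
proof
  show "inj_on lift_class (zigzags F)"
  proof (rule inj_onI)
    fix Z Z' assume "Z \<in> zigzags F" "Z' \<in> zigzags F" and eq: "lift_class Z = lift_class Z'"
    then obtain z z' where Z: "Z = cyc_class z" "zigzag F z" and Z': "Z' = cyc_class z'" "zigzag F z'"
      unfolding zigzags_def by blast
    have "cyc_class (lift_zigzag z') = cyc_class (lift_zigzag z)"
      using eq by (simp add: Z Z' lift_class_cyc_class)
    then show "Z = Z'" using cyc_class_lift_zigzag_eq[OF three Z(2) Z'(2)] Z Z' by simp
  qed
  show "lift_class ` zigzags F = zigzags (Tri F)"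
  proof
    show "lift_class ` zigzags F \<subseteq> zigzags (Tri F)"
      using zigzag_lift_zigzag[OF three] by (auto simp: zigzags_def lift_class_cyc_class)
    show "zigzags (Tri F) \<subseteq> lift_class ` zigzags F"
    proof
      fix W assume "W \<in> zigzags (Tri F)"
      then obtain w where W: "W = cyc_class w" "zigzag (Tri F) w" unfolding zigzags_def by blast
      obtain z k where z: "zigzag F z" and w: "w = shift k (lift_zigzag z)"
        using zigzag_Tri_shift_lift[OF three W(2)] .
      have "W = lift_class (cyc_class z)" by (simp add: W(1) w lift_class_cyc_class)
      moreover have "cyc_class z \<in> zigzags F" using z unfolding zigzags_def by blast
      ultimately show "W \<in> lift_class ` zigzags F" by blast
    qed
  qed
qed

lemma lift_class_rev_zz:
  assumes three: "\<forall>f\<in>F. card f = 3" and Z: "Z \<in> zigzags F"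
  shows "lift_class (rev_zz Z) = rev_zz (lift_class Z)"
proof -
  obtain z where "Z = cyc_class z" "zigzag F z" using Z unfolding zigzags_def by blast
  then show ?thesis
    by (simp add: rev_zz_cyc_class lift_class_cyc_class lift_zigzag_rev_seq[OF three])
qed

lemma induced_eq_image:
  assumes three: "\<forall>f\<in>F. card f = 3" and \<tau>: "\<tau> \<subseteq> zigzags F"
  shows "induced F \<tau> = lift_class ` \<tau>"
proof
  show "induced F \<tau> \<subseteq> lift_class ` \<tau>"
  proof
    fix W assume "W \<in> induced F \<tau>"
    then obtain Z z w where W: "W \<in> zigzags (Tri F)" and "Z \<in> \<tau>" "z \<in> Z" "w \<in> W"
      and zw: "interleaved F z w"
      unfolding induced_def by blast
    then have "zigzag F z" "zigzag (Tri F) w" "Z = cyc_class z" "W = cyc_class w"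
      using \<tau> zigzags_memD zigzags_eq_cyc_class by blast+
    then have "W = lift_class Z"
      using interleaved_zigzag_unique[OF three _ _ zw] by (simp add: lift_class_cyc_class)
    with \<open>Z \<in> \<tau>\<close> show "W \<in> lift_class ` \<tau>" by blast
  qed
  show "lift_class ` \<tau> \<subseteq> induced F \<tau>"
  proof
    fix W assume "W \<in> lift_class ` \<tau>"
    then obtain Z z where "Z \<in> \<tau>" "Z = cyc_class z" "zigzag F z" and W: "W = cyc_class (lift_zigzag z)"
      using \<tau> unfolding zigzags_def by (auto simp: lift_class_cyc_class)
    moreover have "W \<in> zigzags (Tri F)"
      using W zigzag_lift_zigzag[OF three \<open>zigzag F z\<close>] unfolding zigzags_def by blast
    moreover have "z \<in> cyc_class z" "lift_zigzag z \<in> W" using W cyc_class_eq_iff by blast+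
    ultimately show "W \<in> induced F \<tau>"
      using interleaved_lift_zigzag[OF three] unfolding induced_def by blast
  qed
qed

section \<open>Transfer of z-orientations and z-knottedness\<close>

lemma bij_betw_rev_zz_orientation:
  assumes bij: "bij_betw \<phi> A B" and rev: "\<And>Z. Z \<in> A \<Longrightarrow> rev_zz Z \<in> A"
    and comm: "\<And>Z. Z \<in> A \<Longrightarrow> \<phi> (rev_zz Z) = rev_zz (\<phi> Z)"
    and \<tau>: "\<tau> \<subseteq> A" "\<forall>Z\<in>A. (Z \<in> \<tau>) \<noteq> (rev_zz Z \<in> \<tau>)"
  shows "\<forall>W\<in>B. (W \<in> \<phi> ` \<tau>) \<noteq> (rev_zz W \<in> \<phi> ` \<tau>)"
proof
  have inj: "inj_on \<phi> A" and B: "B = \<phi> ` A" using bij by (simp_all add: bij_betw_def)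
  fix W assume "W \<in> B"
  then obtain Z where Z: "Z \<in> A" "W = \<phi> Z" unfolding B by blast
  have "W \<in> \<phi> ` \<tau> \<longleftrightarrow> Z \<in> \<tau>" using inj_on_image_mem_iff[OF inj Z(1) \<tau>(1)] Z(2) by simp
  moreover have "rev_zz W \<in> \<phi> ` \<tau> \<longleftrightarrow> rev_zz Z \<in> \<tau>"
    using inj_on_image_mem_iff[OF inj rev[OF Z(1)] \<tau>(1)] comm[OF Z(1)] Z(2) by simp
  ultimately show "(W \<in> \<phi> ` \<tau>) \<noteq> (rev_zz W \<in> \<phi> ` \<tau>)" using \<tau>(2) Z(1) by blast
qed

lemma bij_betw_rev_zz_knotted:
  assumes bij: "bij_betw \<phi> A B" and rev: "\<And>Z. Z \<in> A \<Longrightarrow> rev_zz Z \<in> A"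
    and comm: "\<And>Z. Z \<in> A \<Longrightarrow> \<phi> (rev_zz Z) = rev_zz (\<phi> Z)"
  shows "(\<exists>W. B = {W, rev_zz W} \<and> W \<noteq> rev_zz W) \<longleftrightarrow> (\<exists>Z. A = {Z, rev_zz Z} \<and> Z \<noteq> rev_zz Z)"
proof -
  have inj: "inj_on \<phi> A" and B: "B = \<phi> ` A" using bij by (simp_all add: bij_betw_def)
  have key: "B = {\<phi> Z, rev_zz (\<phi> Z)} \<and> \<phi> Z \<noteq> rev_zz (\<phi> Z) \<longleftrightarrow> A = {Z, rev_zz Z} \<and> Z \<noteq> rev_zz Z"
    if Z: "Z \<in> A" for Z
  proof -
    have "B = {\<phi> Z, rev_zz (\<phi> Z)} \<longleftrightarrow> \<phi> ` A = \<phi> ` {Z, rev_zz Z}" using comm[OF Z] B by simp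
    also have "\<dots> \<longleftrightarrow> A = {Z, rev_zz Z}"
      using Z rev[OF Z] by (intro inj_on_image_eq_iff[OF inj subset_refl]) simp
    finally show ?thesis using inj_on_eq_iff[OF inj Z rev[OF Z]] comm[OF Z] by simp
  qed
  show ?thesis
  proof
    assume "\<exists>W. B = {W, rev_zz W} \<and> W \<noteq> rev_zz W"
    then obtain W where W: "B = {W, rev_zz W}" "W \<noteq> rev_zz W" by blast
    then obtain Z where "Z \<in> A" "W = \<phi> Z" using B by blast
    then have "A = {Z, rev_zz Z} \<and> Z \<noteq> rev_zz Z" using key[of Z] W by simp
    then show "\<exists>Z. A = {Z, rev_zz Z} \<and> Z \<noteq> rev_zz Z" ..
  next
    assume "\<exists>Z. A = {Z, rev_zz Z} \<and> Z \<noteq> rev_zz Z"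
    then obtain Z where "A = {Z, rev_zz Z}" "Z \<noteq> rev_zz Z" by blast
    then have "B = {\<phi> Z, rev_zz (\<phi> Z)} \<and> \<phi> Z \<noteq> rev_zz (\<phi> Z)" using key[of Z] by simp
    then show "\<exists>W. B = {W, rev_zz W} \<and> W \<noteq> rev_zz W" ..
  qed
qed

lemma z_orientation_induced:
  assumes three: "\<forall>f\<in>F. card f = 3" and \<tau>: "z_orientation F \<tau>"
  shows "z_orientation (Tri F) (induced F \<tau>)"
proof -
  note bij = lift_class_zigzags[OF three]
  have \<tau>: "\<tau> \<subseteq> zigzags F" "\<forall>Z\<in>zigzags F. (Z \<in> \<tau>) \<noteq> (rev_zz Z \<in> \<tau>)"
    using \<tau> unfolding z_orientation_def by blast+
  have "lift_class ` \<tau> \<subseteq> zigzags (Tri F)" using bij_betw_imp_surj_on[OF bij] \<tau>(1) by blast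
  then show ?thesis
    unfolding z_orientation_def induced_eq_image[OF three \<tau>(1)]
    using bij_betw_rev_zz_orientation[OF bij zigzags_rev_zz[OF three] lift_class_rev_zz[OF three] \<tau>]
    by blast
qed

lemma induced_inv_orient:
  assumes three: "\<forall>f\<in>F. card f = 3" and \<tau>: "\<tau> \<subseteq> zigzags F"
  shows "induced F (inv_orient \<tau>) = inv_orient (induced F \<tau>)"
proof -
  have "rev_zz ` \<tau> \<subseteq> zigzags F" using \<tau> zigzags_rev_zz[OF three] by blast
  moreover have "lift_class ` rev_zz ` \<tau> = rev_zz ` lift_class ` \<tau>"
    unfolding image_image using lift_class_rev_zz[OF three] \<tau> by (intro image_cong) auto
  ultimately show ?thesis
    unfolding inv_orient_def by (simp add: induced_eq_image[OF three] \<tau>)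
qed

lemma z_knotted_Tri_iff:
  assumes three: "\<forall>f\<in>F. card f = 3"
  shows "z_knotted (Tri F) \<longleftrightarrow> z_knotted F"
  unfolding z_knotted_def
  by (rule bij_betw_rev_zz_knotted[OF lift_class_zigzags[OF three] zigzags_rev_zz[OF three]
        lift_class_rev_zz[OF three]])

theorem mainTheorem11:
  fixes F :: "'a set set"
  assumes "triangulation F"
  shows "(\<forall>z. zigzag F z \<longrightarrow>
            (\<exists>w. interleaved F z w \<and> zigzag (Tri F) w \<and>
                 (\<forall>i. zz_dir w (3 * i) = (Inl (snd (zz_dir z i)), Inl (fst (zz_dir z i))))))
       \<and> (\<forall>\<tau>. z_orientation F \<tau> \<longrightarrow>
            z_orientation (Tri F) (induced F \<tau>) \<and>
            induced F (inv_orient \<tau>) = inv_orient (induced F \<tau>))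
       \<and> (z_knotted (Tri F) \<longleftrightarrow> z_knotted F)"
proof -
  have three: "\<forall>f\<in>F. card f = 3" using assms by (rule triangulation_card)
  show ?thesis
  proof (intro conjI allI impI)
    fix z assume z: "zigzag F z"
    show "\<exists>w. interleaved F z w \<and> zigzag (Tri F) w \<and>
        (\<forall>i. zz_dir w (3 * i) = (Inl (snd (zz_dir z i)), Inl (fst (zz_dir z i))))"
      using interleaved_lift_zigzag[OF three z] zigzag_lift_zigzag[OF three z]
        zz_dir_lift_zigzag[OF three z]
      by blast
  next
    fix \<tau> assume \<tau>: "z_orientation F \<tau>"
    show "z_orientation (Tri F) (induced F \<tau>)" using z_orientation_induced[OF three \<tau>] .
    show "induced F (inv_orient \<tau>) = inv_orient (induced F \<tau>)"
      using induced_inv_orient[OF three] \<tau> by (simp add: z_orientation_def)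
  next
    show "z_knotted (Tri F) \<longleftrightarrow> z_knotted F" using z_knotted_Tri_iff[OF three] .
  qed
qed

end
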